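(* Let $p^{\mathcal S}(c,x)$ and $p^{\mathcal T}(c,x)$ be the data distributions of the source and target tasks. Define $$D^{ST}_{\mathrm{trace}}=2\sup_{\theta\in\Theta}\bigl|\mathcal R^{\mathcal S}_{\theta}-\mathcal R^{\mathcal T}_{\theta}\bigr|,$$ $$D^{ST}_{\mathrm{TV}}=2\,\mathrm{TV}(p^{\mathcal T}_c,p^{\mathcal S}_c)+2\,\mathbb E_{c\sim p^{\mathcal S}_c}\bigl[\mathrm{TV}\bigl(p^{\mathcal T}(\cdot|c),p^{\mathcal S}(\cdot|c)\bigr)\bigr].$$ Then both $D^{ST}=D^{ST}_{\mathrm{trace}}$ and $D^{ST}=D^{ST}_{\mathrm{TV}}$ satisfy the dissimilarity inequality $$d^{\mathcal T}(\theta,\theta^{\mathcal T}_* )\le d^{\mathcal S}(\theta,\theta^{\mathcal S}_* )+D^{ST}\quad\text{for all }\theta\in\Theta,$$ i.e. the tasks are $D^{ST}$-dissimilar for either choice. Moreover, $D^{ST}_{\mathrm{trace}}\le D^{ST}_{\mathrm{TV}}$.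
   Context: Setting: $\mathcal X$ is a finite set of classical inputs, labels are $c\in\{0,1\}$. $\Theta$ is an arbitrary set of embedding parameters and, for each $\theta\in\Theta$ and $x\in\mathcal X$, $\rho_\theta(x)$ is a density matrix (positive semidefinite, unit trace) on $\mathbb C^n$. $\mathcal M$ is the set of binary POVMs $M=(M_0,M_1)$ with $M_0,M_1\succeq0$ and $M_0+M_1=I$. The loss is $\ell_{\theta,M}(c,x)=1-\mathrm{Tr}(M_c\rho_\theta(x))$. For a task $\mathcal A\in\{\mathcal S,\mathcal T\}$ with joint distribution $p^{\mathcal A}(c,x)$ on $\{0,1\}\times\mathcal X$ (label marginal $p^{\mathcal A}_c$, input marginal $p^{\mathcal A}(x)$, conditionals $p^{\mathcal A}(x|c)$), the expected risk is $\mathcal R^{\mathcal A}_{\theta,M}=\mathbb E_{p^{\mathcal A}(c,x)}[\ell_{\theta,M}(c,x)]$ and $\mathcal R^{\mathcal A}_\theta=\min_{M\in\mathcal M}\mathcal R^{\mathcal A}_{\theta,M}$. Assume $\theta^{\mathcal A}_*\in\arg\min_{\theta\in\Theta}\mathcal R^{\mathcal A}_\theta$ exists. The task-based distance is $d^{\mathcal A}(\theta,\theta')=|\mathcal R^{\mathcal A}_{\theta'}-\mathcal R^{\mathcal A}_\theta|$. $\mathrm{TV}(p,q)=\tfrac12\sum_x|p(x)-q(x)|$ is the total variation distance. *)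

theory Defs
  imports "HOL-Analysis.Analysis"
begin

type_synonym 'n cmat = "complex^'n^'n"

definition mtrace :: "'n::finite cmat \<Rightarrow> complex" where
  "mtrace A = (\<Sum>i\<in>UNIV. A $ i $ i)"

definition psd :: "'n::finite cmat \<Rightarrow> bool" where
  "psd A = (\<forall>v::complex^'n.
      Im (\<Sum>i\<in>UNIV. \<Sum>j\<in>UNIV. cnj (v $ i) * A $ i $ j * v $ j) = 0 \<and>
      0 \<le> Re (\<Sum>i\<in>UNIV. \<Sum>j\<in>UNIV. cnj (v $ i) * A $ i $ j * v $ j))"

definition density_matrix :: "'n::finite cmat \<Rightarrow> bool" where
  "density_matrix \<rho> = (psd \<rho> \<and> mtrace \<rho> = 1)"

definition POVMs :: "('n::finite cmat \<times> 'n cmat) set" where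
  "POVMs = {M. psd (fst M) \<and> psd (snd M) \<and> fst M + snd M = mat 1}"

definition povm_el :: "('n::finite cmat \<times> 'n cmat) \<Rightarrow> nat \<Rightarrow> 'n cmat" where
  "povm_el M c = (if c = 0 then fst M else snd M)"

text \<open>Labels are c \<in> {0,1}; a joint distribution is p :: nat => 'x => real on {0,1} x 'x.\<close>
definition labels :: "nat set" where "labels = {0, 1}"

definition is_joint_dist :: "(nat \<Rightarrow> 'x::finite \<Rightarrow> real) \<Rightarrow> bool" where
  "is_joint_dist p = ((\<forall>c\<in>labels. \<forall>x. 0 \<le> p c x) \<and> (\<Sum>c\<in>labels. \<Sum>x\<in>UNIV. p c x) = 1)"

definition loss :: "('n::finite cmat \<times> 'n cmat) \<Rightarrow> 'n cmat \<Rightarrow> nat \<Rightarrow> real" where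
  "loss M \<rho> c = 1 - Re (mtrace (povm_el M c ** \<rho>))"

definition risk_M ::
  "(nat \<Rightarrow> 'x::finite \<Rightarrow> real) \<Rightarrow> ('t \<Rightarrow> 'x \<Rightarrow> 'n::finite cmat) \<Rightarrow> 't
     \<Rightarrow> ('n cmat \<times> 'n cmat) \<Rightarrow> real" where
  "risk_M p \<rho> \<theta> M = (\<Sum>c\<in>labels. \<Sum>x\<in>UNIV. p c x * loss M (\<rho> \<theta> x) c)"

definition risk ::
  "(nat \<Rightarrow> 'x::finite \<Rightarrow> real) \<Rightarrow> ('t \<Rightarrow> 'x \<Rightarrow> 'n::finite cmat) \<Rightarrow> 't \<Rightarrow> real" where
  "risk p \<rho> \<theta> = (INF M\<in>POVMs. risk_M p \<rho> \<theta> M)"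

definition task_dist ::
  "(nat \<Rightarrow> 'x::finite \<Rightarrow> real) \<Rightarrow> ('t \<Rightarrow> 'x \<Rightarrow> 'n::finite cmat) \<Rightarrow> 't \<Rightarrow> 't \<Rightarrow> real" where
  "task_dist p \<rho> \<theta> \<theta>' = \<bar>risk p \<rho> \<theta>' - risk p \<rho> \<theta>\<bar>"

definition TV :: "('a \<Rightarrow> real) \<Rightarrow> ('a \<Rightarrow> real) \<Rightarrow> 'a set \<Rightarrow> real" where
  "TV f g S = (1/2) * (\<Sum>x\<in>S. \<bar>f x - g x\<bar>)"

definition label_marg :: "(nat \<Rightarrow> 'x::finite \<Rightarrow> real) \<Rightarrow> nat \<Rightarrow> real" where
  "label_marg p c = (\<Sum>x\<in>UNIV. p c x)"

text \<open>Conditional p(x|c) = p(c,x)/p_c (with the HOL convention r/0 = 0).\<close>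
definition cond :: "(nat \<Rightarrow> 'x::finite \<Rightarrow> real) \<Rightarrow> nat \<Rightarrow> 'x \<Rightarrow> real" where
  "cond p c x = p c x / label_marg p c"

definition D_trace ::
  "(nat \<Rightarrow> 'x::finite \<Rightarrow> real) \<Rightarrow> (nat \<Rightarrow> 'x \<Rightarrow> real) \<Rightarrow> 't set
     \<Rightarrow> ('t \<Rightarrow> 'x \<Rightarrow> 'n::finite cmat) \<Rightarrow> real" where
  "D_trace pS pT \<Theta> \<rho> = 2 * (SUP \<theta>\<in>\<Theta>. \<bar>risk pS \<rho> \<theta> - risk pT \<rho> \<theta>\<bar>)"

definition D_TV :: "(nat \<Rightarrow> 'x::finite \<Rightarrow> real) \<Rightarrow> (nat \<Rightarrow> 'x \<Rightarrow> real) \<Rightarrow> real" where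
  "D_TV pS pT = 2 * TV (label_marg pT) (label_marg pS) labels
     + 2 * (\<Sum>c\<in>labels. label_marg pS c * TV (cond pT c) (cond pS c) UNIV)"

end

theory Submission
  imports Defs
begin

text \<open>
  The trace part of the bound only needs that every POVM loss lies in \<open>[0,1]\<close>, which amounts to
  \<open>0 \<le> Re (tr (A B))\<close> for positive semidefinite \<open>A\<close>, \<open>B\<close>. This is proved by peeling off rank-one
  pieces: if \<open>b\<close> is the \<open>k\<close>-th column of \<open>B\<close> and \<open>B\<^sub>k\<^sub>k > 0\<close>, then \<open>B = S + b b\<^sup>* / B\<^sub>k\<^sub>k\<close> with the
  Schur complement \<open>S\<close> again positive semidefinite and vanishing in row and column \<open>k\<close>, while
  \<open>tr (A b b\<^sup>*) = b\<^sup>* A b \<ge> 0\<close>. Given losses in \<open>[0,1]\<close>, the risks of two tasks for a fixed POVM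
  differ by at most half the \<open>\<ell>\<^sub>1\<close>-distance of the joint distributions, and splitting
  \<open>p(c,x) = p\<^sub>c p(x|c)\<close> bounds that distance by \<open>D\<^sub>T\<^sub>V\<close>. Both bounds pass to the infima over POVMs, and
  a uniform bound \<open>D/2\<close> on the risk gap yields \<open>D\<close>-dissimilarity by comparing the optimal parameters.
\<close>

definition sesq_form :: "'n::finite cmat \<Rightarrow> complex^'n \<Rightarrow> complex^'n \<Rightarrow> complex" where
  "sesq_form A u v = (\<Sum>i\<in>UNIV. \<Sum>j\<in>UNIV. cnj (u $ i) * A $ i $ j * v $ j)"

lemma psd_iff_sesq_form: "psd A \<longleftrightarrow> (\<forall>v. Im (sesq_form A v v) = 0 \<and> 0 \<le> Re (sesq_form A v v))"
  by (simp add: psd_def sesq_form_def)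

lemma sesq_form_add_left: "sesq_form A (u + w) v = sesq_form A u v + sesq_form A w v"
  by (simp add: sesq_form_def algebra_simps sum.distrib)

lemma sesq_form_add_right: "sesq_form A u (v + w) = sesq_form A u v + sesq_form A u w"
  by (simp add: sesq_form_def algebra_simps sum.distrib)

lemma sum_mult_axis:
  fixes f :: "'n::finite \<Rightarrow> complex" shows "(\<Sum>j\<in>UNIV. f j * axis k s $ j) = f k * s"
proof -
  have "(\<Sum>j\<in>UNIV. f j * axis k s $ j) = (\<Sum>j\<in>UNIV. if j = k then f k * s else 0)"
    by (rule sum.cong) (auto simp: axis_def)
  then show ?thesis by simp
qed

lemma sesq_form_axis_left: "sesq_form A (axis k s) v = cnj s * (\<Sum>j\<in>UNIV. A $ k $ j * v $ j)"
proof -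
  have "sesq_form A (axis k s) v =
      (\<Sum>i\<in>UNIV. if i = k then cnj s * (\<Sum>j\<in>UNIV. A $ k $ j * v $ j) else 0)"
    unfolding sesq_form_def by (rule sum.cong) (auto simp: axis_def sum_distrib_left mult.assoc)
  then show ?thesis by simp
qed

lemma sesq_form_axis_right: "sesq_form A u (axis k s) = s * (\<Sum>i\<in>UNIV. cnj (u $ i) * A $ i $ k)"
  by (simp add: sesq_form_def axis_def if_distrib sum_distrib_left mult.commute mult.left_commute
      cong: if_cong)

lemma sesq_form_axis_axis: "sesq_form A (axis k s) (axis l t) = cnj s * t * A $ k $ l"
  by (simp add: sesq_form_axis_left sum_mult_axis)

lemma sesq_form_axis_plus_axis:
  "sesq_form A (axis i a + axis j b) (axis i a + axis j b) =
     cnj a * a * A$i$i + cnj a * b * A$i$j + cnj b * a * A$j$i + cnj b * b * A$j$j"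
  by (simp add: sesq_form_add_left sesq_form_add_right sesq_form_axis_axis)

lemma psd_diag:
  assumes "psd A" shows "Im (A$k$k) = 0" "0 \<le> Re (A$k$k)"
  using assms sesq_form_axis_axis[of A k 1 k 1] unfolding psd_iff_sesq_form by (metis mult_1 complex_cnj_one)+

lemma psd_diag_real: "psd A \<Longrightarrow> A$k$k = complex_of_real (Re (A$k$k))"
  using psd_diag(1) by (simp add: complex_eq_iff)

lemma psd_hermitian:
  assumes "psd A" shows "A$i$j = cnj (A$j$i)"
proof (cases "i = j")
  case True
  then show ?thesis using psd_diag(1)[OF assms, of i] by (simp add: complex_eq_iff)
next
  case False
  have "Im (sesq_form A (axis i 1 + axis j 1) (axis i 1 + axis j 1)) = 0"
    and "Im (sesq_form A (axis i 1 + axis j \<i>) (axis i 1 + axis j \<i>)) = 0"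
    using assms unfolding psd_iff_sesq_form by blast+
  then show ?thesis
    using psd_diag(1)[OF assms] unfolding sesq_form_axis_plus_axis by (simp add: complex_eq_iff)
qed

text \<open>Otherwise the form is negative at \<open>s e\<^sub>k + e\<^sub>j\<close> for a large enough multiple \<open>s\<close> of \<open>-A\<^sub>k\<^sub>j\<close>.\<close>

lemma psd_row_zero_if_diag_zero:
  assumes "psd A" "A$k$k = 0" shows "A$k$j = 0"
proof (rule ccontr)
  assume nz: "A$k$j \<noteq> 0"
  define a where "a = cmod (A$k$j) ^ 2"
  have apos: "a > 0" using nz by (simp add: a_def)
  define t where "t = (Re (A$j$j) + 1) / (2 * a)"
  define s where "s = - of_real t * A$k$j"
  have herm: "A$j$k = cnj (A$k$j)" using psd_hermitian[OF assms(1)] by blast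
  have "0 \<le> Re (sesq_form A (axis k s + axis j 1) (axis k s + axis j 1))"
    using assms(1) unfolding psd_iff_sesq_form by blast
  also have "\<dots> = Re (A$j$j) - 2 * t * a"
    unfolding sesq_form_axis_plus_axis using assms(2) herm
    by (simp add: s_def a_def cmod_power2 algebra_simps) (simp add: power2_eq_square algebra_simps)
  also have "\<dots> = -1" using apos by (simp add: t_def field_simps)
  finally show False by simp
qed

definition schur_complement :: "'n::finite cmat \<Rightarrow> 'n \<Rightarrow> 'n cmat" where
  "schur_complement B k = (\<chi> i j. B$i$j - B$i$k * B$k$j / B$k$k)"

lemma sesq_form_schur_complement:
  "sesq_form (schur_complement B k) v v = sesq_form B v v -
     (\<Sum>i\<in>UNIV. cnj (v$i) * B$i$k) * (\<Sum>j\<in>UNIV. B$k$j * v$j) / B$k$k"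
proof -
  have "sesq_form (schur_complement B k) v v =
      sesq_form B v v - (\<Sum>i\<in>UNIV. \<Sum>j\<in>UNIV. (cnj (v$i) * B$i$k) * (B$k$j * v$j)) / B$k$k"
    unfolding sesq_form_def schur_complement_def
    by (simp add: algebra_simps sum_subtractf sum_divide_distrib)
  then show ?thesis by (simp add: sum_product)
qed

text \<open>The form of the Schur complement at \<open>v\<close> is the form of \<open>B\<close> at \<open>v + s e\<^sub>k\<close>, where \<open>s\<close> is
  chosen to kill the \<open>k\<close>-th component of \<open>B (v + s e\<^sub>k)\<close>.\<close>

lemma psd_schur_complement:
  assumes "psd B" "B$k$k \<noteq> 0" shows "psd (schur_complement B k)"
  unfolding psd_iff_sesq_form
proof
  fix v
  define \<beta> where "\<beta> = (\<Sum>j\<in>UNIV. B$k$j * v$j)"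
  have col: "(\<Sum>i\<in>UNIV. cnj (v$i) * B$i$k) = cnj \<beta>"
    unfolding \<beta>_def by (simp add: psd_hermitian[OF assms(1), of _ k] mult.commute)
  define s where "s = - \<beta> / B$k$k"
  have right: "sesq_form B v (axis k s) = s * cnj \<beta>"
    using col by (simp add: sesq_form_axis_right)
  have "sesq_form (schur_complement B k) v v = sesq_form B (v + axis k s) (v + axis k s)"
    unfolding sesq_form_schur_complement sesq_form_add_left sesq_form_add_right sesq_form_axis_axis
      sesq_form_axis_left right col \<beta>_def[symmetric]
    using assms(2) psd_diag_real[OF assms(1), of k]
    by (simp add: s_def field_simps sum_mult_axis)
  then show "Im (sesq_form (schur_complement B k) v v) = 0 \<and>
      0 \<le> Re (sesq_form (schur_complement B k) v v)"
    using assms(1) unfolding psd_iff_sesq_form by simp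
qed

lemma mtrace_matrix_mult: "mtrace (A ** B) = (\<Sum>i\<in>UNIV. \<Sum>j\<in>UNIV. A$i$j * B$j$i)"
  by (simp add: mtrace_def matrix_matrix_mult_def)

lemma mtrace_mult_schur_complement:
  assumes "psd B"
  shows "mtrace (A ** B) =
    mtrace (A ** schur_complement B k) + sesq_form A (\<chi> j. B$j$k) (\<chi> j. B$j$k) / B$k$k"
proof -
  have "A$i$j * B$j$i = A$i$j * schur_complement B k $j$i + cnj (B$i$k) * A$i$j * B$j$k / B$k$k"
    for i j
    using psd_hermitian[OF assms, of k i] by (simp add: schur_complement_def algebra_simps)
  then show ?thesis
    unfolding mtrace_matrix_mult sesq_form_def by (simp add: sum.distrib sum_divide_distrib)
qed

lemma mtrace_mult_psd_nonneg_supported: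
  assumes "finite S" "psd A" "psd B" "\<forall>i j. i \<notin> S \<or> j \<notin> S \<longrightarrow> B$i$j = 0"
  shows "0 \<le> Re (mtrace (A ** B))"
  using assms(1,3,4)
proof (induction S arbitrary: B rule: finite_induct)
  case empty
  then have "B = 0" by (simp add: vec_eq_iff)
  then show ?case by (simp add: mtrace_def)
next
  case (insert k S)
  show ?case
  proof (cases "B$k$k = 0")
    case True
    have "B$k$j = 0" "B$j$k = 0" for j
      using psd_row_zero_if_diag_zero[OF insert.prems(1) True] psd_hermitian[OF insert.prems(1), of j k]
      by simp_all
    then have "\<forall>i j. i \<notin> S \<or> j \<notin> S \<longrightarrow> B$i$j = 0" using insert.prems(2) by (metis insert_iff)
    then show ?thesis using insert.IH insert.prems(1) by blast
  next
    case nonzero: False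
    have "schur_complement B k $i$j = 0" if "i \<notin> S \<or> j \<notin> S" for i j
    proof (cases "i = k \<or> j = k")
      case True
      then show ?thesis using nonzero by (auto simp: schur_complement_def)
    next
      case False
      then have "B$i$j = 0" "B$i$k = 0 \<or> B$k$j = 0" using that insert.prems(2) by auto
      then show ?thesis by (auto simp: schur_complement_def)
    qed
    then have "0 \<le> Re (mtrace (A ** schur_complement B k))"
      using insert.IH psd_schur_complement[OF insert.prems(1) nonzero] by blast
    moreover have "0 \<le> Re (sesq_form A (\<chi> j. B$j$k) (\<chi> j. B$j$k) / of_real (Re (B$k$k)))"
      using assms(2) psd_diag(2)[OF insert.prems(1), of k]
      unfolding psd_iff_sesq_form by (simp add: Re_divide_of_real)
    ultimately show ?thesis
      using mtrace_mult_schur_complement[OF insert.prems(1), of A k]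
        psd_diag_real[OF insert.prems(1), of k] by simp
  qed
qed

lemma mtrace_mult_psd_nonneg: "psd A \<Longrightarrow> psd B \<Longrightarrow> 0 \<le> Re (mtrace (A ** B))"
  using mtrace_mult_psd_nonneg_supported[of UNIV A B] by simp

lemma psd_mat_1: "psd (mat 1 :: 'n::finite cmat)"
  unfolding psd_iff_sesq_form
proof
  fix v :: "complex^'n"
  have "sesq_form (mat 1) v v = (\<Sum>i\<in>UNIV. \<Sum>j\<in>UNIV. if j = i then cnj (v $ i) * v $ i else 0)"
    unfolding sesq_form_def by (intro sum.cong) (auto simp: mat_def)
  also have "\<dots> = of_real (\<Sum>i\<in>UNIV. (Re (v $ i))\<^sup>2 + (Im (v $ i))\<^sup>2)"
    unfolding of_real_sum by (intro sum.cong refl) (simp add: complex_eq_iff power2_eq_square)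
  finally show "Im (sesq_form (mat 1) v v) = 0 \<and> 0 \<le> Re (sesq_form (mat 1) v v)"
    by (simp add: sum_nonneg)
qed

lemma mat_1_0_in_POVMs: "(mat 1, 0) \<in> POVMs"
  unfolding POVMs_def using psd_mat_1 by (simp add: psd_def[of 0])

lemma loss_bounded:
  assumes "density_matrix \<rho>" "M \<in> POVMs"
  shows "0 \<le> loss M \<rho> c \<and> loss M \<rho> c \<le> 1"
proof -
  have M: "psd (fst M)" "psd (snd M)" "fst M + snd M = mat 1" using assms(2) by (auto simp: POVMs_def)
  have \<rho>: "psd \<rho>" "mtrace \<rho> = 1" using assms(1) by (auto simp: density_matrix_def)
  have "mtrace (fst M ** \<rho>) + mtrace (snd M ** \<rho>) = mtrace ((fst M + snd M) ** \<rho>)"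
    by (simp add: mtrace_matrix_mult algebra_simps sum.distrib)
  also have "\<dots> = 1" using M(3) \<rho>(2) by simp
  finally have "Re (mtrace (fst M ** \<rho>)) + Re (mtrace (snd M ** \<rho>)) = 1"
    by (simp add: complex_eq_iff)
  moreover have "0 \<le> Re (mtrace (fst M ** \<rho>))" "0 \<le> Re (mtrace (snd M ** \<rho>))"
    using mtrace_mult_psd_nonneg M \<rho> by auto
  ultimately show ?thesis by (auto simp: loss_def povm_el_def)
qed

text \<open>Subtracting \<open>1/2\<close> from \<open>f\<close> does not change the sum because \<open>p\<close> and \<open>q\<close> have equal mass.\<close>

lemma abs_sum_diff_mult_le:
  fixes p q f :: "'a \<Rightarrow> real"
  assumes "finite A" "sum p A = sum q A" "\<And>x. x \<in> A \<Longrightarrow> 0 \<le> f x \<and> f x \<le> 1"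
  shows "\<bar>\<Sum>x\<in>A. (p x - q x) * f x\<bar> \<le> (\<Sum>x\<in>A. \<bar>p x - q x\<bar>) / 2"
proof -
  have "(\<Sum>x\<in>A. (p x - q x) * f x) =
      (\<Sum>x\<in>A. (p x - q x) * (f x - 1/2)) + (\<Sum>x\<in>A. p x - q x) / 2"
    by (simp add: sum_divide_distrib sum.distrib[symmetric] algebra_simps)
  moreover have "(\<Sum>x\<in>A. p x - q x) = 0" using assms(2) by (simp add: sum_subtractf)
  moreover have "\<bar>\<Sum>x\<in>A. (p x - q x) * (f x - 1/2)\<bar> \<le> (\<Sum>x\<in>A. \<bar>p x - q x\<bar> * \<bar>f x - 1/2\<bar>)"
    unfolding abs_mult[symmetric] by (rule sum_abs)
  moreover have "\<bar>f x - 1/2\<bar> \<le> 1/2" if "x \<in> A" for x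
    using assms(3)[OF that] unfolding abs_le_iff by linarith
  then have "(\<Sum>x\<in>A. \<bar>p x - q x\<bar> * \<bar>f x - 1/2\<bar>) \<le> (\<Sum>x\<in>A. \<bar>p x - q x\<bar> * (1/2))"
    by (intro sum_mono mult_left_mono) auto
  ultimately show ?thesis by (simp add: sum_divide_distrib)
qed

lemma label_marg_mult_cond:
  assumes "\<forall>x. 0 \<le> p c x" shows "p c x = label_marg p c * cond p c x"
proof (cases "label_marg p c = 0")
  case True
  then have "\<forall>x\<in>UNIV. p c x = 0" using assms by (simp add: label_marg_def sum_nonneg_eq_0_iff)
  then show ?thesis by (simp add: cond_def)
qed (simp add: cond_def)

lemma sum_cond_le_1: "(\<Sum>x\<in>UNIV. cond p c x) \<le> 1"
proof -
  have "(\<Sum>x\<in>UNIV. cond p c x) = label_marg p c / label_marg p c"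
    unfolding cond_def by (simp add: label_marg_def sum_divide_distrib[symmetric])
  then show ?thesis by (cases "label_marg p c = 0") auto
qed

lemma sum_abs_diff_le_cond_TV:
  assumes "\<forall>x. 0 \<le> pS c x" "\<forall>x. 0 \<le> pT c x"
  shows "(\<Sum>x\<in>UNIV. \<bar>pS c x - pT c x\<bar>) \<le>
     2 * (label_marg pS c * TV (cond pT c) (cond pS c) UNIV) + \<bar>label_marg pT c - label_marg pS c\<bar>"
proof -
  let ?a = "label_marg pS c" and ?b = "label_marg pT c"
  have a: "0 \<le> ?a" using assms(1) by (simp add: label_marg_def sum_nonneg)
  have cond_T: "0 \<le> cond pT c x" for x using assms(2) by (simp add: cond_def label_marg_def sum_nonneg)
  have "\<bar>pS c x - pT c x\<bar> \<le> ?a * \<bar>cond pT c x - cond pS c x\<bar> + \<bar>?b - ?a\<bar> * cond pT c x" for x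
  proof -
    have "pS c x - pT c x = ?a * (cond pS c x - cond pT c x) + (?a - ?b) * cond pT c x"
      using label_marg_mult_cond[where p=pS and c=c and x=x, OF assms(1)]
        label_marg_mult_cond[where p=pT and c=c and x=x, OF assms(2)]
      by (simp add: algebra_simps)
    then show ?thesis
      using abs_triangle_ineq[of "?a * (cond pS c x - cond pT c x)" "(?a - ?b) * cond pT c x"] a cond_T
      by (simp add: abs_mult abs_minus_commute)
  qed
  then have "(\<Sum>x\<in>UNIV. \<bar>pS c x - pT c x\<bar>) \<le>
      (\<Sum>x\<in>UNIV. ?a * \<bar>cond pT c x - cond pS c x\<bar> + \<bar>?b - ?a\<bar> * cond pT c x)"
    by (rule sum_mono)
  also have "\<dots> =
      ?a * (\<Sum>x\<in>UNIV. \<bar>cond pT c x - cond pS c x\<bar>) + \<bar>?b - ?a\<bar> * (\<Sum>x\<in>UNIV. cond pT c x)"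
    by (simp add: sum.distrib sum_distrib_left)
  also have "\<dots> \<le> ?a * (\<Sum>x\<in>UNIV. \<bar>cond pT c x - cond pS c x\<bar>) + \<bar>?b - ?a\<bar>"
    using mult_left_mono[OF sum_cond_le_1[of pT c], of "\<bar>?b - ?a\<bar>"] by simp
  finally show ?thesis by (simp add: TV_def)
qed

lemma sum_abs_diff_le_D_TV:
  assumes "is_joint_dist pS" "is_joint_dist pT"
  shows "(\<Sum>c\<in>labels. \<Sum>x\<in>UNIV. \<bar>pS c x - pT c x\<bar>) \<le> D_TV pS pT"
proof -
  have "(\<Sum>c\<in>labels. \<Sum>x\<in>UNIV. \<bar>pS c x - pT c x\<bar>) \<le>
     (\<Sum>c\<in>labels. 2 * (label_marg pS c * TV (cond pT c) (cond pS c) UNIV)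
        + \<bar>label_marg pT c - label_marg pS c\<bar>)"
    using assms by (intro sum_mono sum_abs_diff_le_cond_TV) (auto simp: is_joint_dist_def)
  also have "\<dots> = D_TV pS pT"
    by (simp add: D_TV_def TV_def sum.distrib sum_distrib_left)
  finally show ?thesis .
qed

lemma risk_M_as_sum: "risk_M p \<rho> \<theta> M = (\<Sum>(c, x)\<in>labels \<times> UNIV. p c x * loss M (\<rho> \<theta> x) c)"
  unfolding risk_M_def by (simp add: sum.cartesian_product labels_def)

lemma abs_risk_M_diff_le_D_TV:
  fixes pS pT :: "nat \<Rightarrow> 'x::finite \<Rightarrow> real"
  assumes "is_joint_dist pS" "is_joint_dist pT" "\<forall>x. density_matrix (\<rho> \<theta> x)" "M \<in> POVMs"
  shows "\<bar>risk_M pS \<rho> \<theta> M - risk_M pT \<rho> \<theta> M\<bar> \<le> D_TV pS pT / 2"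
proof -
  let ?p = "\<lambda>(c, x). pS c x" and ?q = "\<lambda>(c, x). pT c x"
  have fin: "finite (labels \<times> (UNIV :: 'x set))" by (simp add: labels_def)
  have "sum ?p (labels \<times> UNIV) = sum ?q (labels \<times> UNIV)"
    using assms(1,2) by (simp add: is_joint_dist_def sum.cartesian_product[symmetric])
  then have "\<bar>\<Sum>(c, x)\<in>labels \<times> UNIV. (pS c x - pT c x) * loss M (\<rho> \<theta> x) c\<bar>
      \<le> (\<Sum>(c, x)\<in>labels \<times> UNIV. \<bar>pS c x - pT c x\<bar>) / 2"
    using abs_sum_diff_mult_le[OF fin, of ?p ?q "\<lambda>(c, x). loss M (\<rho> \<theta> x) c"]
      loss_bounded[OF assms(3)[rule_format] assms(4)]
    by (simp add: case_prod_unfold)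
  also have "\<dots> \<le> D_TV pS pT / 2"
    using sum_abs_diff_le_D_TV[OF assms(1,2)] by (simp add: sum.cartesian_product)
  finally show ?thesis
    by (simp add: risk_M_as_sum sum_subtractf[symmetric] case_prod_unfold left_diff_distrib)
qed

lemma risk_M_nonneg:
  assumes "is_joint_dist p" "\<forall>x. density_matrix (\<rho> \<theta> x)" "M \<in> POVMs"
  shows "0 \<le> risk_M p \<rho> \<theta> M"
  unfolding risk_M_def using assms loss_bounded[OF assms(2)[rule_format] assms(3)]
  by (intro sum_nonneg mult_nonneg_nonneg) (auto simp: is_joint_dist_def)

lemma cINF_le_cINF_add:
  fixes a b :: "'m \<Rightarrow> real"
  assumes "P \<noteq> {}" "bdd_below (a ` P)" "\<And>M. M \<in> P \<Longrightarrow> a M \<le> b M + D"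
  shows "(INF M\<in>P. a M) \<le> (INF M\<in>P. b M) + D"
proof -
  have "(INF M\<in>P. a M) - D \<le> (INF M\<in>P. b M)"
    using assms cINF_lower[OF assms(2)] by (intro cINF_greatest) force+
  then show ?thesis by simp
qed

lemma abs_cINF_diff_le:
  fixes a b :: "'m \<Rightarrow> real"
  assumes "P \<noteq> {}" "bdd_below (a ` P)" "bdd_below (b ` P)" "\<And>M. M \<in> P \<Longrightarrow> \<bar>a M - b M\<bar> \<le> D"
  shows "\<bar>(INF M\<in>P. a M) - (INF M\<in>P. b M)\<bar> \<le> D"
  using cINF_le_cINF_add[OF assms(1,2), of b D] cINF_le_cINF_add[OF assms(1,3), of a D] assms(4)
  by (force simp: abs_le_iff)

lemma abs_risk_diff_le_D_TV:
  assumes "is_joint_dist pS" "is_joint_dist pT" "\<forall>x. density_matrix (\<rho> \<theta> x)"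
  shows "\<bar>risk pS \<rho> \<theta> - risk pT \<rho> \<theta>\<bar> \<le> D_TV pS pT / 2"
  unfolding risk_def
proof (rule abs_cINF_diff_le)
  show "bdd_below ((risk_M pS \<rho> \<theta>) ` POVMs)" "bdd_below ((risk_M pT \<rho> \<theta>) ` POVMs)"
    using risk_M_nonneg assms by (metis bdd_belowI2)+
qed (use mat_1_0_in_POVMs abs_risk_M_diff_le_D_TV[where \<rho>=\<rho> and \<theta>=\<theta>, OF assms] in auto)

lemma dissimilar_if_risk_gap_le:
  fixes RS RT :: "'t \<Rightarrow> real"
  assumes "\<And>\<theta>. \<theta> \<in> \<Theta> \<Longrightarrow> \<bar>RS \<theta> - RT \<theta>\<bar> \<le> D / 2"
    and "\<theta>S \<in> \<Theta>" "\<forall>\<theta>\<in>\<Theta>. RS \<theta>S \<le> RS \<theta>"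
    and "\<theta>T \<in> \<Theta>" "\<forall>\<theta>\<in>\<Theta>. RT \<theta>T \<le> RT \<theta>"
    and "\<theta> \<in> \<Theta>"
  shows "\<bar>RT \<theta>T - RT \<theta>\<bar> \<le> \<bar>RS \<theta>S - RS \<theta>\<bar> + D"
  using assms(1)[of \<theta>] assms(1)[of \<theta>T] assms(2-6) unfolding abs_le_iff by force

theorem theorem3p1:
  fixes pS pT :: "nat \<Rightarrow> 'x::finite \<Rightarrow> real"
    and \<Theta> :: "'t set"
    and \<rho> :: "'t \<Rightarrow> 'x \<Rightarrow> 'n::finite cmat"
    and \<theta>S \<theta>T :: 't
  assumes "is_joint_dist pS" and "is_joint_dist pT"
    and "\<forall>\<theta>\<in>\<Theta>. \<forall>x. density_matrix (\<rho> \<theta> x)"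
    and "\<theta>S \<in> \<Theta>" and "\<forall>\<theta>\<in>\<Theta>. risk pS \<rho> \<theta>S \<le> risk pS \<rho> \<theta>"
    and "\<theta>T \<in> \<Theta>" and "\<forall>\<theta>\<in>\<Theta>. risk pT \<rho> \<theta>T \<le> risk pT \<rho> \<theta>"
  shows "(\<forall>\<theta>\<in>\<Theta>. task_dist pT \<rho> \<theta> \<theta>T \<le> task_dist pS \<rho> \<theta> \<theta>S + D_trace pS pT \<Theta> \<rho>)
       \<and> (\<forall>\<theta>\<in>\<Theta>. task_dist pT \<rho> \<theta> \<theta>T \<le> task_dist pS \<rho> \<theta> \<theta>S + D_TV pS pT)
       \<and> D_trace pS pT \<Theta> \<rho> \<le> D_TV pS pT"
proof -
  let ?gap = "\<lambda>\<theta>. \<bar>risk pS \<rho> \<theta> - risk pT \<rho> \<theta>\<bar>"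
  have dissimilar: "task_dist pT \<rho> \<theta> \<theta>T \<le> task_dist pS \<rho> \<theta> \<theta>S + D"
    if "\<And>\<theta>. \<theta> \<in> \<Theta> \<Longrightarrow> ?gap \<theta> \<le> D / 2" "\<theta> \<in> \<Theta>" for D \<theta>
    unfolding task_dist_def using dissimilar_if_risk_gap_le[OF that(1) assms(4-7) that(2)] .
  have TV_gap: "?gap \<theta> \<le> D_TV pS pT / 2" if "\<theta> \<in> \<Theta>" for \<theta>
    using assms(3) that by (intro abs_risk_diff_le_D_TV[OF assms(1,2)]) blast
  then have "bdd_above (?gap ` \<Theta>)" by (meson bdd_aboveI2)
  then have trace_gap: "?gap \<theta> \<le> D_trace pS pT \<Theta> \<rho> / 2" if "\<theta> \<in> \<Theta>" for \<theta>
    using cSUP_upper[OF that] unfolding D_trace_def by fastforce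
  have "D_trace pS pT \<Theta> \<rho> \<le> D_TV pS pT"
    using cSUP_least[of \<Theta> ?gap] TV_gap assms(4) unfolding D_trace_def by fastforce
  then show ?thesis using dissimilar trace_gap TV_gap by blast
qed

end
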